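(* Let $\mathbb X$ be a separable reflexive Banach space, let $\mu\in\mathbb X$, and let $\hat\mu_1,\ldots,\hat\mu_k$ be independent random elements of $\mathbb X$. Fix $\alpha\in(0,\tfrac12)$. Let $0<p<\alpha$ and $\varepsilon>0$ be such that $$\Pr\big(\|\hat\mu_j-\mu\|>\varepsilon\big)\le p\quad\text{for all }1\le j\le k.$$ Let $\hat\mu=\mathrm{med}(\hat\mu_1,\ldots,\hat\mu_k)$. Then $$\Pr\big(\|\hat\mu-\mu\|>C_\alpha\varepsilon\big)\le e^{-k\psi(\alpha;p)}.$$ Here $C_\alpha=\frac{2(1-\alpha)}{1-2\alpha}$ in general, and $C_\alpha=(1-\alpha)\sqrt{\frac1{1-2\alpha}}$ when $\mathbb X$ is a Hilbert space.
   Context: $\mathrm{med}(x_1,\ldots,x_k)$ denotes a geometric median, i.e. any minimizer over $y\in\mathbb X$ of $\sum_{j=1}^k\|y-x_j\|$. For $0<p<\alpha<\tfrac12$, $$\psi(\alpha;p)=(1-\alpha)\log\frac{1-\alpha}{1-p}+\alpha\log\frac{\alpha}{p}.$$ *)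

theory Defs
  imports "HOL-Analysis.Analysis" "HOL-Probability.Probability"
begin

definition canonical_bidual :: "'a::real_normed_vector \<Rightarrow> (('a \<Rightarrow>\<^sub>L real) \<Rightarrow>\<^sub>L real)" where
  "canonical_bidual x = Blinfun (\<lambda>f. blinfun_apply f x)"

definition reflexive_space :: "'a::real_normed_vector itself \<Rightarrow> bool" where
  "reflexive_space (_::'a itself) \<longleftrightarrow> surj (canonical_bidual :: 'a \<Rightarrow> _)"

text \<open>The norm of the space is induced by an inner product (i.e. the space is a Hilbert space,
  completeness being given by the banach class).\<close>
definition hilbert_norm :: "'a::real_normed_vector itself \<Rightarrow> bool" where
  "hilbert_norm (_::'a itself) \<longleftrightarrow>
     (\<exists>ip :: 'a \<Rightarrow> 'a \<Rightarrow> real.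
        (\<forall>x y. ip x y = ip y x) \<and>
        (\<forall>y. linear (\<lambda>x. ip x y)) \<and>
        (\<forall>x. x \<noteq> 0 \<longrightarrow> ip x x > 0) \<and>
        (\<forall>x. norm x = sqrt (ip x x)))"

definition is_geometric_median :: "nat \<Rightarrow> (nat \<Rightarrow> 'a::real_normed_vector) \<Rightarrow> 'a \<Rightarrow> bool" where
  "is_geometric_median k x y \<longleftrightarrow>
     (\<forall>z. (\<Sum>j\<in>{1..k}. norm (y - x j)) \<le> (\<Sum>j\<in>{1..k}. norm (z - x j)))"

definition psi :: "real \<Rightarrow> real \<Rightarrow> real" where
  "psi \<alpha> p = (1 - \<alpha>) * ln ((1 - \<alpha>) / (1 - p)) + \<alpha> * ln (\<alpha> / p)"

end

theory Submission
  imports Defs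
begin

(* The median-of-means bound rests on one deterministic and one probabilistic fact.
   (1) If z is a geometric median of x_1, ..., x_k and ||z - mu|| > C_alpha * r, then at
       least alpha * k of the points satisfy ||x_j - mu|| > r.  In a normed space this follows
       by comparing the cost of z with the cost of mu through the triangle inequality
       (median_far_many_bad, C = 2(1-alpha)/(1-2alpha)).  If the norm comes from an inner
       product, z cannot decrease its cost by moving towards mu; expanding the cost to second
       order in that direction and bounding the angle under which z sees the points near mu
       gives the sharper constant C = (1-alpha) sqrt(1/(1-2alpha)) (median_far_many_bad_hilbert).
   (2) Among independent events of probability at most p < alpha, the probability that a
       fraction at least alpha of them occurs is at most exp(-n psi(alpha;p)); this is the
       exponential Chernoff bound (count_tail_bound).
   The theorem applies (1) pointwise with r = epsilon and then (2), once for each constant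
   (median_tail_bound).  Separability and reflexivity of the space only serve to guarantee
   that a geometric median exists; the bound itself does not use them. *)

lemma sum_if_card:
  assumes "finite A"
  shows "(\<Sum>j\<in>A. if P j then (a::real) else b)
         = real (card {j\<in>A. P j}) * a + real (card {j\<in>A. \<not> P j}) * b"
proof -
  have "(\<Sum>j\<in>A. if P j then a else b) = (\<Sum>j\<in>A \<inter> {x. P x}. a) + (\<Sum>j\<in>A \<inter> - {x. P x}. b)"
    by (rule sum.If_cases[OF assms])
  also have "A \<inter> {x. P x} = {j\<in>A. P j}" by auto
  also have "A \<inter> - {x. P x} = {j\<in>A. \<not> P j}" by auto
  finally show ?thesis by simp
qed

lemma card_filter_split:
  assumes "finite A"
  shows "real (card {j\<in>A. P j}) + real (card {j\<in>A. \<not> P j}) = real (card A)"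
  using sum_if_card[OF assms, of P 1 1] by simp

text \<open>In a normed space, comparing the cost of a geometric median \<open>z\<close> with the cost of \<open>mu\<close>:
  each far sample lets \<open>z\<close> save at most \<open>\<parallel>z - mu\<parallel>\<close>, each near sample costs it at least
  \<open>\<parallel>z - mu\<parallel> - 2r\<close>.\<close>
lemma median_cost_comparison:
  fixes x :: "nat \<Rightarrow> 'a::real_normed_vector"
  assumes med: "is_geometric_median k x z"
  shows "real (card {j\<in>{1..k}. \<not> r < norm (x j - mu)}) * (norm (z - mu) - 2 * r)
         \<le> real (card {j\<in>{1..k}. r < norm (x j - mu)}) * norm (z - mu)"
proof -
  define d where "d = norm (z - mu)"
  have pointwise: "norm (mu - x j) + (if r < norm (x j - mu) then - d else d - 2 * r) \<le> norm (z - x j)" for j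
  proof (cases "r < norm (x j - mu)")
    case True
    have "norm (mu - x j) \<le> norm (mu - z) + norm (z - x j)"
      using norm_triangle_ineq[of "mu - z" "z - x j"] by simp
    then show ?thesis using True by (simp add: d_def norm_minus_commute)
  next
    case False
    have "norm (z - mu) \<le> norm (z - x j) + norm (x j - mu)"
      using norm_triangle_ineq[of "z - x j" "x j - mu"] by simp
    then show ?thesis using False by (simp add: d_def norm_minus_commute)
  qed
  have "(\<Sum>j\<in>{1..k}. norm (mu - x j) + (if r < norm (x j - mu) then - d else d - 2 * r))
        \<le> (\<Sum>j\<in>{1..k}. norm (z - x j))"
    by (intro sum_mono pointwise)
  also have "\<dots> \<le> (\<Sum>j\<in>{1..k}. norm (mu - x j))"
    using med unfolding is_geometric_median_def by blast
  finally have "(\<Sum>j\<in>{1..k}. if r < norm (x j - mu) then - d else d - 2 * r) \<le> 0"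
    by (simp add: sum.distrib)
  thus ?thesis by (simp add: sum_if_card d_def)
qed

lemma general_constant_arith:
  fixes B G d r \<alpha> :: real
  assumes BG: "B \<ge> 0" "G \<ge> 0" and cost: "G * (d - 2 * r) \<le> B * d"
    and a: "0 < \<alpha>" "\<alpha> < 1/2" and r: "r > 0"
    and d: "d > 2 * (1 - \<alpha>) / (1 - 2 * \<alpha>) * r"
  shows "\<alpha> * (G + B) \<le> B"
proof -
  have c: "1 - 2 * \<alpha> > 0" using a by simp
  have dC: "d * (1 - 2 * \<alpha>) > 2 * (1 - \<alpha>) * r"
    using d c by (simp add: pos_divide_less_eq mult.commute)
  moreover have "(1 - 2 * \<alpha>) * r \<le> 2 * (1 - \<alpha>) * r" using a r by simp
  ultimately have "(d - r) * (1 - 2 * \<alpha>) > 0" by (simp add: algebra_simps)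
  hence dr: "d - r > 0" using c by (simp add: zero_less_mult_iff)
  have "2 * \<alpha> * (d - r) \<le> d - 2 * r" using dC by (simp add: algebra_simps)
  hence "(G + B) * (2 * \<alpha> * (d - r)) \<le> (G + B) * (d - 2 * r)"
    using BG by (intro mult_left_mono) auto
  also have "\<dots> \<le> B * (2 * (d - r))" using cost by (simp add: algebra_simps)
  finally have "(\<alpha> * (G + B)) * (2 * (d - r)) \<le> B * (2 * (d - r))" by (simp add: algebra_simps)
  thus ?thesis using dr by simp
qed

lemma median_far_many_bad:
  fixes x :: "nat \<Rightarrow> 'a::real_normed_vector"
  assumes med: "is_geometric_median k x z" and a: "0 < \<alpha>" "\<alpha> < 1/2" and r: "r > 0"
    and far: "norm (z - mu) > 2 * (1 - \<alpha>) / (1 - 2 * \<alpha>) * r"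
  shows "\<alpha> * real k \<le> real (card {j\<in>{1..k}. r < norm (x j - mu)})"
  using general_constant_arith[OF _ _ median_cost_comparison[OF med] a r far]
    card_filter_split[of "{1..k}" "\<lambda>j. \<not> r < norm (x j - mu)"] by simp

text \<open>A real number \<open>a\<close> with \<open>0 \<le> t a + t\<^sup>2 b\<close> for all \<open>t > 0\<close> is nonnegative: the first-order
  condition at a minimum, in the form needed for the one-sided variation of the cost.\<close>
lemma linear_coeff_nonneg_of_quadratic:
  fixes a b :: real
  assumes b: "b \<ge> 0" and quad: "\<And>t. t > 0 \<Longrightarrow> 0 \<le> t * a + t\<^sup>2 * b"
  shows "a \<ge> 0"
proof (rule ccontr)
  assume "\<not> a \<ge> 0"
  hence a: "a < 0" by simp
  define t where "t = - a / (2 * b + 1)"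
  have t: "t > 0" unfolding t_def using a b by (intro divide_pos_pos) auto
  have "a + t * b = a * (b + 1) / (2 * b + 1)" using b by (simp add: t_def field_simps)
  also have "\<dots> < 0" using a b by (intro divide_neg_pos mult_neg_pos) auto
  finally have "t * a + t\<^sup>2 * b < 0" using t
    by (metis mult_pos_neg power2_eq_square distrib_left mult.assoc)
  thus False using quad[OF t] by simp
qed

text \<open>This is what
  \<open>hilbert_norm\<close> provides; positivity of \<open>ip\<close> is already implied by the norm equation.\<close>
locale inner_norm =
  fixes ip :: "'a::real_normed_vector \<Rightarrow> 'a \<Rightarrow> real"
  assumes ip_sym: "ip x y = ip y x"
    and ip_linear_left: "linear (\<lambda>x. ip x y)"
    and norm_eq_sqrt_ip: "norm x = sqrt (ip x x)"
begin

lemma ip_add_left: "ip (u + v) w = ip u w + ip v w"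
  using linear_add[OF ip_linear_left] by simp
lemma ip_scale_left: "ip (c *\<^sub>R u) w = c * ip u w"
  using linear_scale[OF ip_linear_left] by simp
lemma ip_add_right: "ip w (u + v) = ip w u + ip w v"
  using ip_add_left ip_sym by metis
lemma ip_scale_right: "ip w (c *\<^sub>R u) = c * ip w u"
  using ip_scale_left ip_sym by metis
lemma ip_minus_left: "ip (- u) w = - ip u w"
  using ip_scale_left[of "-1" u w] by simp
lemma ip_self_nonneg: "ip u u \<ge> 0"
  using norm_ge_zero[of u] by (simp add: norm_eq_sqrt_ip)
lemma norm_sq_ip: "(norm u)\<^sup>2 = ip u u"
  using ip_self_nonneg[of u] by (simp add: norm_eq_sqrt_ip)
lemma ip_self_add: "ip (u + v) (u + v) = ip u u + 2 * ip u v + ip v v"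
  by (simp add: ip_add_left ip_add_right ip_sym[of v u])

text \<open>Second-order upper bound for the norm along a line (from \<open>sqrt (A\<^sup>2 + h) \<le> A + h/(2A)\<close>).\<close>
lemma norm_add_scaled_le:
  assumes a: "norm a > 0"
  shows "norm (a + t *\<^sub>R w) \<le> norm a + t * ip a w / norm a + t\<^sup>2 * (norm w)\<^sup>2 / (2 * norm a)"
proof -
  define h where "h = 2 * t * ip a w + t\<^sup>2 * (norm w)\<^sup>2"
  have sq: "(norm (a + t *\<^sub>R w))\<^sup>2 = (norm a)\<^sup>2 + h"
    unfolding h_def norm_sq_ip ip_self_add by (simp add: ip_scale_left ip_scale_right power2_eq_square)
  have "(norm a)\<^sup>2 + h \<le> (norm a + h / (2 * norm a))\<^sup>2"
    using a by (simp add: power2_eq_square field_simps)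
  hence "norm (a + t *\<^sub>R w) \<le> \<bar>norm a + h / (2 * norm a)\<bar>"
    using sq by (metis abs_norm_cancel power2_le_imp_le abs_ge_zero power2_abs)
  moreover have "norm a + h / (2 * norm a) \<ge> 0"
  proof -
    have "0 \<le> (norm a)\<^sup>2 + h" using sq by (metis zero_le_power2)
    hence "0 \<le> (norm a)\<^sup>2 + h + (norm a)\<^sup>2" using zero_le_power2[of "norm a"] by linarith
    hence "0 \<le> ((norm a)\<^sup>2 + h + (norm a)\<^sup>2) / (2 * norm a)" using a by simp
    also have "\<dots> = norm a + h / (2 * norm a)" using a by (simp add: power2_eq_square field_simps)
    finally show ?thesis .
  qed
  ultimately show ?thesis using a by (simp add: h_def add_divide_distrib power2_eq_square)
qed

lemma angle_bound:
  assumes v: "norm v \<le> r" and w: "r < norm w"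
  shows "sqrt ((norm w)\<^sup>2 - r\<^sup>2) * norm (w + v) \<le> ip (w + v) w"
proof -
  define d where "d = norm w"
  define s where "s = ip v w"
  have vv: "ip v v \<le> r\<^sup>2" using v norm_sq_ip[of v] by (metis norm_ge_zero power_mono)
  have r0: "0 \<le> r" using v norm_ge_zero order_trans by blast
  have rd: "r\<^sup>2 < d\<^sup>2" using w r0 by (simp add: d_def power_strict_mono)
  have nwv: "(norm (w + v))\<^sup>2 = d\<^sup>2 + 2 * s + ip v v"
    unfolding norm_sq_ip ip_self_add d_def by (simp add: s_def ip_sym[of w v] norm_sq_ip)
  have ipwv: "ip (w + v) w = d\<^sup>2 + s"
    by (simp add: ip_add_left s_def d_def norm_sq_ip)
  have "0 \<le> (norm (w + v))\<^sup>2" by simp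
  hence pos: "d\<^sup>2 + s > 0" using nwv vv rd by linarith
  have "(d\<^sup>2 + s)\<^sup>2 - (d\<^sup>2 - r\<^sup>2) * (d\<^sup>2 + 2 * s + ip v v) = (s + r\<^sup>2)\<^sup>2 + (r\<^sup>2 - ip v v) * (d\<^sup>2 - r\<^sup>2)"
    by (simp add: power2_eq_square algebra_simps)
  moreover have "(r\<^sup>2 - ip v v) * (d\<^sup>2 - r\<^sup>2) \<ge> 0" using vv rd by simp
  ultimately have "(d\<^sup>2 - r\<^sup>2) * (norm (w + v))\<^sup>2 \<le> (d\<^sup>2 + s)\<^sup>2"
    unfolding nwv by (smt (verit) zero_le_power2)
  hence "sqrt ((d\<^sup>2 - r\<^sup>2) * (norm (w + v))\<^sup>2) \<le> d\<^sup>2 + s"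
    using pos by (metis real_sqrt_le_mono real_sqrt_abs abs_of_pos)
  thus ?thesis unfolding ipwv d_def by (simp add: real_sqrt_mult)
qed

lemma step_toward_center:
  fixes y mu z :: 'a
  assumes y: "norm (y - mu) \<le> r" and z: "r < norm (z - mu)" and t: "t \<ge> 0"
  shows "norm (z + t *\<^sub>R (mu - z) - y)
         \<le> norm (z - y) - t * sqrt ((norm (z - mu))\<^sup>2 - r\<^sup>2) + t\<^sup>2 * (norm (z - mu))\<^sup>2 / (2 * norm (z - y))"
proof -
  define a where "a = z - y"
  define w where "w = mu - z"
  define q where "q = sqrt ((norm (z - mu))\<^sup>2 - r\<^sup>2)"
  have a_eq: "a = - (w + (y - mu))" by (simp add: a_def w_def)
  have nw: "norm w = norm (z - mu)" by (simp add: w_def norm_minus_commute)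
  have "norm (z - mu) \<le> norm (z - y) + norm (y - mu)"
    using norm_triangle_ineq[of "z - y" "y - mu"] by simp
  hence a0: "norm a > 0" using y z unfolding a_def by linarith
  have "q * norm (w + (y - mu)) \<le> ip (w + (y - mu)) w"
    using angle_bound[OF y, of w] z unfolding q_def nw by simp
  hence "q * norm a \<le> - ip a w"
    unfolding a_eq norm_minus_cancel ip_minus_left by simp
  hence "t * (q * norm a) \<le> t * (- ip a w)" using t by (rule mult_left_mono)
  hence "t * ip a w / norm a \<le> - t * q"
    using a0 by (simp add: field_simps)
  moreover have "norm (z + t *\<^sub>R (mu - z) - y) = norm (a + t *\<^sub>R w)"
    by (simp add: a_def w_def algebra_simps)
  ultimately show ?thesis
    using norm_add_scaled_le[OF a0, of t w] unfolding q_def nw a_def by linarith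
qed

text \<open>First-order optimality of a geometric median in the direction of \<open>mu\<close>: the near samples
  pull with total force at least \<open>G sqrt (d\<^sup>2 - r\<^sup>2)\<close>, the far ones push back with at most \<open>B d\<close>.\<close>
lemma median_first_order:
  fixes x :: "nat \<Rightarrow> 'a" and z mu :: 'a
  assumes med: "is_geometric_median k x z" and rz: "r < norm (z - mu)"
  shows "real (card {j\<in>{1..k}. \<not> r < norm (x j - mu)}) * sqrt ((norm (z - mu))\<^sup>2 - r\<^sup>2)
         \<le> real (card {j\<in>{1..k}. r < norm (x j - mu)}) * norm (z - mu)"
proof -
  define d where "d = norm (z - mu)"
  define q where "q = sqrt (d\<^sup>2 - r\<^sup>2)"
  define bad where "bad j \<longleftrightarrow> r < norm (x j - mu)" for j
  define c where "c j = (if bad j then 0 else d\<^sup>2 / (2 * norm (z - x j)))" for j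
  have "0 \<le> t * (real (card {j\<in>{1..k}. bad j}) * d - real (card {j\<in>{1..k}. \<not> bad j}) * q)
             + t\<^sup>2 * (\<Sum>j\<in>{1..k}. c j)" if t: "t > 0" for t
  proof -
    have pointwise: "norm (z + t *\<^sub>R (mu - z) - x j)
        \<le> norm (z - x j) + (if bad j then t * d else - t * q) + t\<^sup>2 * c j" for j
    proof (cases "bad j")
      case True
      have "norm ((z - x j) + t *\<^sub>R (mu - z)) \<le> norm (z - x j) + t * d"
        using norm_triangle_ineq[of "z - x j" "t *\<^sub>R (mu - z)"] t
        by (simp add: d_def norm_minus_commute)
      thus ?thesis using True by (simp add: c_def algebra_simps)
    next
      case False
      thus ?thesis using step_toward_center[of "x j" mu r z t] rz t
        by (simp add: c_def bad_def d_def q_def)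
    qed
    have "(\<Sum>j\<in>{1..k}. norm (z - x j)) \<le> (\<Sum>j\<in>{1..k}. norm (z + t *\<^sub>R (mu - z) - x j))"
      using med unfolding is_geometric_median_def by blast
    also have "\<dots> \<le> (\<Sum>j\<in>{1..k}. norm (z - x j) + (if bad j then t * d else - t * q) + t\<^sup>2 * c j)"
      by (intro sum_mono pointwise)
    finally show ?thesis
      by (simp add: sum.distrib sum_if_card sum_distrib_left algebra_simps)
  qed
  moreover have "(\<Sum>j\<in>{1..k}. c j) \<ge> 0" unfolding c_def by (intro sum_nonneg) auto
  ultimately have "0 \<le> real (card {j\<in>{1..k}. bad j}) * d - real (card {j\<in>{1..k}. \<not> bad j}) * q"
    by (rule linear_coeff_nonneg_of_quadratic[rotated])
  thus ?thesis by (simp add: bad_def d_def q_def)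
qed

end

lemma hilbert_norm_inner_norm:
  fixes ty :: "'a::real_normed_vector itself"
  assumes "hilbert_norm ty"
  obtains ip :: "'a \<Rightarrow> 'a \<Rightarrow> real" where "inner_norm ip"
  using assms unfolding hilbert_norm_def inner_norm_def by blast

lemma hilbert_constant_gap:
  fixes d r \<alpha> :: real
  assumes a: "0 < \<alpha>" "\<alpha> < 1/2" and r: "r > 0"
    and d: "d > (1 - \<alpha>) * sqrt (1 / (1 - 2 * \<alpha>)) * r"
  shows "r < d" and "\<alpha> * d < (1 - \<alpha>) * sqrt (d\<^sup>2 - r\<^sup>2)"
proof -
  have c: "1 - 2 * \<alpha> > 0" using a by simp
  have C: "((1 - \<alpha>) * sqrt (1 / (1 - 2 * \<alpha>)))\<^sup>2 = (1 - \<alpha>)\<^sup>2 / (1 - 2 * \<alpha>)"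
    using c by (simp add: power_mult_distrib)
  have C1: "(1 - \<alpha>) * sqrt (1 / (1 - 2 * \<alpha>)) \<ge> 1"
  proof -
    have "(1 - \<alpha>)\<^sup>2 / (1 - 2 * \<alpha>) \<ge> 1" using c by (simp add: power2_eq_square field_simps)
    hence "1\<^sup>2 \<le> ((1 - \<alpha>) * sqrt (1 / (1 - 2 * \<alpha>)))\<^sup>2" using C by simp
    thus ?thesis by (rule power2_le_imp_le) (use a in simp)
  qed
  have "r \<le> (1 - \<alpha>) * sqrt (1 / (1 - 2 * \<alpha>)) * r" using C1 r by simp
  thus rd: "r < d" using d by linarith
  have "((1 - \<alpha>) * sqrt (1 / (1 - 2 * \<alpha>)) * r)\<^sup>2 < d\<^sup>2"
    using d C1 r by (intro power_strict_mono) auto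
  hence "(1 - \<alpha>)\<^sup>2 * r\<^sup>2 < d\<^sup>2 * (1 - 2 * \<alpha>)"
    using c C by (simp add: power_mult_distrib pos_divide_less_eq mult.commute)
  moreover have "(1 - \<alpha>)\<^sup>2 * (d\<^sup>2 - r\<^sup>2) - (\<alpha> * d)\<^sup>2 = d\<^sup>2 * (1 - 2 * \<alpha>) - (1 - \<alpha>)\<^sup>2 * r\<^sup>2"
    by (simp add: power2_eq_square algebra_simps)
  ultimately have "sqrt ((\<alpha> * d)\<^sup>2) < sqrt ((1 - \<alpha>)\<^sup>2 * (d\<^sup>2 - r\<^sup>2))"
    by (intro real_sqrt_less_mono) linarith
  thus "\<alpha> * d < (1 - \<alpha>) * sqrt (d\<^sup>2 - r\<^sup>2)"
    using a rd r by (simp add: real_sqrt_mult)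
qed

lemma hilbert_constant_arith:
  fixes B G d r \<alpha> :: real
  assumes BG: "B \<ge> 0" "G \<ge> 0" and cost: "G * sqrt (d\<^sup>2 - r\<^sup>2) \<le> B * d"
    and a: "0 < \<alpha>" "\<alpha> < 1/2" and r: "r > 0"
    and d: "d > (1 - \<alpha>) * sqrt (1 / (1 - 2 * \<alpha>)) * r"
  shows "\<alpha> * (G + B) \<le> B"
proof (rule ccontr)
  define q where "q = sqrt (d\<^sup>2 - r\<^sup>2)"
  assume "\<not> \<alpha> * (G + B) \<le> B"
  hence less: "B < \<alpha> * (G + B)" by simp
  have rd: "r < d" and gap: "\<alpha> * d < (1 - \<alpha>) * q"
    using hilbert_constant_gap[OF a r d] by (simp_all add: q_def)
  have q0: "q \<ge> 0" using rd r by (simp add: q_def power_mono)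
  have k0: "G + B > 0" using less BG a by (cases "G + B = 0") auto
  have "B * d < \<alpha> * (G + B) * d" using less rd r by (intro mult_strict_right_mono) auto
  also have "\<dots> = (G + B) * (\<alpha> * d)" by simp
  also have "\<dots> < (G + B) * ((1 - \<alpha>) * q)" using gap k0 by (rule mult_strict_left_mono)
  also have "\<dots> = ((1 - \<alpha>) * (G + B)) * q" by simp
  also have "\<dots> \<le> G * q" using less q0 by (intro mult_right_mono) (auto simp: algebra_simps)
  finally show False using cost by (simp add: q_def)
qed

lemma median_far_many_bad_hilbert:
  fixes x :: "nat \<Rightarrow> 'a::real_normed_vector"
  assumes H: "hilbert_norm TYPE('a)"
    and med: "is_geometric_median k x z" and a: "0 < \<alpha>" "\<alpha> < 1/2" and r: "r > 0"
    and far: "norm (z - mu) > (1 - \<alpha>) * sqrt (1 / (1 - 2 * \<alpha>)) * r"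
  shows "\<alpha> * real k \<le> real (card {j\<in>{1..k}. r < norm (x j - mu)})"
proof -
  obtain ip :: "'a \<Rightarrow> 'a \<Rightarrow> real" where "inner_norm ip" using H by (rule hilbert_norm_inner_norm)
  moreover have "r < norm (z - mu)" using hilbert_constant_gap(1)[OF a r far] .
  ultimately show ?thesis
    using hilbert_constant_arith[OF _ _ inner_norm.median_first_order[OF _ med] a r far]
      card_filter_split[of "{1..k}" "\<lambda>j. \<not> r < norm (x j - mu)"] by simp
qed

text \<open>The exponent in the Chernoff bound: with the optimal tilt \<open>l\<close> the bound
  \<open>exp (-l \<alpha> n) (1 + (e\<^sup>l - 1) p)\<^sup>n\<close> equals \<open>exp (-n \<psi>(\<alpha>;p))\<close>.\<close>
lemma chernoff_exponent:
  fixes \<alpha> p :: real and n :: nat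
  assumes pa: "0 < p" "p < \<alpha>" "\<alpha> < 1"
  defines "l \<equiv> ln (\<alpha> * (1 - p) / (p * (1 - \<alpha>)))"
  shows "l > 0"
    and "exp (- l * (\<alpha> * real n)) * (1 + (exp l - 1) * p) ^ n = exp (- real n * psi \<alpha> p)"
proof -
  have "p * (1 - \<alpha>) < \<alpha> * (1 - p)" using pa by (simp add: algebra_simps)
  moreover have "p * (1 - \<alpha>) > 0" using pa by simp
  ultimately have ratio: "\<alpha> * (1 - p) / (p * (1 - \<alpha>)) > 1" by simp
  thus "l > 0" by (simp add: l_def)
  have "1 + (exp l - 1) * p = (1 - p) / (1 - \<alpha>)"
    using ratio pa by (simp add: l_def field_simps)
  hence "(1 + (exp l - 1) * p) ^ n = exp (real n * ln ((1 - p) / (1 - \<alpha>)))"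
    using pa by (simp add: exp_of_nat_mult)
  hence "exp (- l * (\<alpha> * real n)) * (1 + (exp l - 1) * p) ^ n
         = exp (real n * (ln ((1 - p) / (1 - \<alpha>)) - \<alpha> * l))"
    by (simp add: exp_add[symmetric] algebra_simps)
  also have "ln ((1 - p) / (1 - \<alpha>)) - \<alpha> * l = - psi \<alpha> p"
  proof -
    have l_eq: "l = ln \<alpha> + ln (1 - p) - ln p - ln (1 - \<alpha>)"
      using pa by (simp add: l_def ln_div ln_mult)
    have ln_eq: "ln ((1 - p) / (1 - \<alpha>)) = ln (1 - p) - ln (1 - \<alpha>)"
      using pa by (simp add: ln_div)
    have psi_eq: "psi \<alpha> p = (1 - \<alpha>) * (ln (1 - \<alpha>) - ln (1 - p)) + \<alpha> * (ln \<alpha> - ln p)"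
      using pa by (simp add: psi_def ln_div)
    show ?thesis unfolding l_eq ln_eq psi_eq by (simp add: algebra_simps)
  qed
  finally show "exp (- l * (\<alpha> * real n)) * (1 + (exp l - 1) * p) ^ n = exp (- real n * psi \<alpha> p)"
    by simp
qed

context prob_space
begin

lemma nn_integral_exp_indicator:
  assumes A: "A \<in> events" and l: "l \<ge> 0"
  shows "(\<integral>\<^sup>+\<omega>. ennreal (exp (l * indicator A \<omega>)) \<partial>M) = ennreal (1 + (exp l - 1) * prob A)"
proof -
  define c where "c = exp l - 1"
  have c: "c \<ge> 0" using l by (simp add: c_def)
  have "ennreal (exp l) = 1 + ennreal c" using c ennreal_plus[of 1 c] by (simp add: c_def)
  hence "(\<integral>\<^sup>+\<omega>. ennreal (exp (l * indicator A \<omega>)) \<partial>M) = (\<integral>\<^sup>+\<omega>. 1 + ennreal c * indicator A \<omega> \<partial>M)"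
    by (intro nn_integral_cong) (simp add: indicator_def)
  also have "\<dots> = 1 + ennreal c * emeasure M A"
    using A by (simp add: nn_integral_add nn_integral_cmult_indicator emeasure_space_1)
  also have "\<dots> = ennreal (1 + c * prob A)"
    using c by (simp add: emeasure_eq_measure ennreal_mult ennreal_plus)
  finally show ?thesis by (simp add: c_def)
qed

lemma exp_moment_indicator_le:
  assumes X: "X \<in> measurable M N" and B: "B \<in> sets N" and l: "l \<ge> 0"
    and bnd: "prob {\<omega>\<in>space M. X \<omega> \<in> B} \<le> p"
  shows "(\<integral>\<^sup>+\<omega>. ennreal (exp (l * indicator B (X \<omega>))) \<partial>M) \<le> ennreal (1 + (exp l - 1) * p)"
proof -
  define A where "A = X -` B \<inter> space M"
  have A: "A \<in> events" unfolding A_def using measurable_sets[OF X B] .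
  have "(\<integral>\<^sup>+\<omega>. ennreal (exp (l * indicator B (X \<omega>))) \<partial>M) = (\<integral>\<^sup>+\<omega>. ennreal (exp (l * indicator A \<omega>)) \<partial>M)"
    by (intro nn_integral_cong) (simp add: A_def indicator_def)
  also have "\<dots> = ennreal (1 + (exp l - 1) * prob A)"
    using A l by (rule nn_integral_exp_indicator)
  also have "\<dots> \<le> ennreal (1 + (exp l - 1) * p)"
    using bnd l unfolding A_def by (intro ennreal_leI add_left_mono mult_left_mono)
      (auto simp: Int_def conj_commute)
  finally show ?thesis .
qed

lemma exp_moment_sum_indep:
  fixes Y :: "'i \<Rightarrow> 'a \<Rightarrow> real"
  assumes indY: "indep_vars (\<lambda>_. borel) Y I" and fin: "finite I"
  shows "(\<integral>\<^sup>+\<omega>. ennreal (exp (l * (\<Sum>j\<in>I. Y j \<omega>))) * indicator (space M) \<omega> \<partial>M)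
         = (\<Prod>j\<in>I. \<integral>\<^sup>+\<omega>. ennreal (exp (l * Y j \<omega>)) \<partial>M)"
proof -
  have "(\<integral>\<^sup>+\<omega>. ennreal (exp (l * (\<Sum>j\<in>I. Y j \<omega>))) * indicator (space M) \<omega> \<partial>M)
      = (\<integral>\<^sup>+\<omega>. (\<Prod>j\<in>I. ennreal (exp (l * Y j \<omega>))) \<partial>M)"
    by (intro nn_integral_cong) (simp add: sum_distrib_left exp_sum fin prod_ennreal)
  also have "\<dots> = (\<Prod>j\<in>I. \<integral>\<^sup>+\<omega>. ennreal (exp (l * Y j \<omega>)) \<partial>M)"
    by (intro indep_vars_nn_integral fin indep_vars_compose2[OF indY]) auto
  finally show ?thesis .
qed

text \<open>It is stated for any \<open>E\<close> inside that event, so that \<open>E\<close> itself need not be measurable.\<close>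
lemma count_tail_bound:
  assumes ind: "indep_vars N X I" and fin: "finite I"
    and pa: "0 < p" "p < \<alpha>" "\<alpha> < 1"
    and B: "\<And>j. j \<in> I \<Longrightarrow> B j \<in> sets (N j)"
    and bnd: "\<And>j. j \<in> I \<Longrightarrow> prob {\<omega>\<in>space M. X j \<omega> \<in> B j} \<le> p"
    and E: "E \<subseteq> {\<omega>\<in>space M. \<alpha> * real (card I) \<le> real (card {j\<in>I. X j \<omega> \<in> B j})}"
  shows "prob E \<le> exp (- real (card I) * psi \<alpha> p)"
proof -
  define n where "n = card I"
  define l where "l = ln (\<alpha> * (1 - p) / (p * (1 - \<alpha>)))"
  define Y :: "_ \<Rightarrow> _ \<Rightarrow> real" where "Y j \<omega> = indicator (B j) (X j \<omega>)" for j \<omega>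
  define S where "S = {\<omega>\<in>space M. \<alpha> * real n \<le> (\<Sum>j\<in>I. Y j \<omega>)}"
  have l: "l > 0" unfolding l_def by (rule chernoff_exponent(1)[OF pa])
  have Xm: "X j \<in> measurable M (N j)" if "j \<in> I" for j
    using ind that unfolding indep_vars_def by auto
  have Ym: "Y j \<in> borel_measurable M" if "j \<in> I" for j
    unfolding Y_def using Xm[OF that] B[OF that] by measurable
  have [measurable]: "(\<lambda>\<omega>. \<Sum>j\<in>I. Y j \<omega>) \<in> borel_measurable M"
    using Ym by (intro borel_measurable_sum) auto
  have count: "real (card {j\<in>I. X j \<omega> \<in> B j}) = (\<Sum>j\<in>I. Y j \<omega>)" for \<omega>
    using sum_if_card[OF fin, of "\<lambda>j. X j \<omega> \<in> B j" 1 0] by (simp add: Y_def indicator_def of_bool_def)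
  have "emeasure M S \<le> ennreal (exp (- l * (\<alpha> * real n)))
          * (\<integral>\<^sup>+\<omega>. ennreal (exp (l * (\<Sum>j\<in>I. Y j \<omega>))) * indicator (space M) \<omega> \<partial>M)"
    unfolding S_def by (rule Chernoff_ineq_nn_integral_ge[OF l sets.top]) measurable
  also have "(\<integral>\<^sup>+\<omega>. ennreal (exp (l * (\<Sum>j\<in>I. Y j \<omega>))) * indicator (space M) \<omega> \<partial>M)
           = (\<Prod>j\<in>I. \<integral>\<^sup>+\<omega>. ennreal (exp (l * Y j \<omega>)) \<partial>M)"
    unfolding Y_def using B by (intro exp_moment_sum_indep indep_vars_compose2[OF ind] fin) auto
  also have "\<dots> \<le> (\<Prod>j\<in>I. ennreal (1 + (exp l - 1) * p))"
    unfolding Y_def using Xm B bnd l by (intro prod_mono_ennreal exp_moment_indicator_le) auto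
  also have "\<dots> = ennreal ((1 + (exp l - 1) * p) ^ n)"
    unfolding prod_constant n_def using l pa by (intro ennreal_power) simp
  finally have "emeasure M S \<le> ennreal (exp (- l * (\<alpha> * real n)) * (1 + (exp l - 1) * p) ^ n)"
    using l pa by (simp add: mult_left_mono ennreal_mult)
  also have "exp (- l * (\<alpha> * real n)) * (1 + (exp l - 1) * p) ^ n = exp (- real n * psi \<alpha> p)"
    unfolding l_def by (rule chernoff_exponent(2)[OF pa])
  finally have "prob S \<le> exp (- real n * psi \<alpha> p)" by (simp add: emeasure_eq_measure)
  moreover have "prob E \<le> prob S"
    using E by (intro finite_measure_mono) (auto simp: S_def n_def count)
  ultimately show ?thesis by (simp add: n_def)
qed

end

lemma median_tail_bound:
  fixes X :: "nat \<Rightarrow> 's \<Rightarrow> 'a::real_normed_vector"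
  assumes P: "prob_space M" and ind: "prob_space.indep_vars M (\<lambda>_. borel) X {1..k}"
    and pa: "0 < p" "p < \<alpha>" "\<alpha> < 1"
    and bnd: "\<And>j. j \<in> {1..k} \<Longrightarrow> measure M {\<omega> \<in> space M. norm (X j \<omega> - mu) > \<epsilon>} \<le> p"
    and med: "\<And>\<omega>. \<omega> \<in> space M \<Longrightarrow> is_geometric_median k (\<lambda>j. X j \<omega>) (muhat \<omega>)"
    and many_far: "\<And>x z. is_geometric_median k x z \<Longrightarrow> norm (z - mu) > C * \<epsilon>
                     \<Longrightarrow> \<alpha> * real k \<le> real (card {j\<in>{1..k}. \<epsilon> < norm (x j - mu)})"
  shows "measure M {\<omega> \<in> space M. norm (muhat \<omega> - mu) > C * \<epsilon>} \<le> exp (- real k * psi \<alpha> p)"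
proof -
  define far where "far = {v::'a. \<epsilon> < norm (v - mu)}"
  have "far \<in> sets borel"
    unfolding far_def by (intro borel_open open_Collect_less continuous_intros)
  moreover have "{\<omega> \<in> space M. norm (muhat \<omega> - mu) > C * \<epsilon>}
      \<subseteq> {\<omega> \<in> space M. \<alpha> * real (card {1..k}) \<le> real (card {j\<in>{1..k}. X j \<omega> \<in> far})}"
    using many_far med by (auto simp: far_def)
  ultimately show ?thesis
    using prob_space.count_tail_bound[OF P ind _ pa, of "\<lambda>_. far"] bnd by (simp add: far_def)
qed

theorem theorem3p1:
  fixes M :: "'s measure"
    and X :: "nat \<Rightarrow> 's \<Rightarrow> 'a::banach"
    and mu :: 'a
    and muhat :: "'s \<Rightarrow> 'a"
    and k :: nat
    and \<alpha> p \<epsilon> :: real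
  assumes "prob_space M"
    and "separable_space (euclidean :: 'a topology)"
    and "reflexive_space TYPE('a)"
    and "\<And>j. j \<in> {1..k} \<Longrightarrow> X j \<in> borel_measurable M"
    and "prob_space.indep_vars M (\<lambda>_. borel) X {1..k}"
    and "0 < \<alpha>" and "\<alpha> < 1/2"
    and "0 < p" and "p < \<alpha>"
    and "0 < \<epsilon>"
    and "\<And>j. j \<in> {1..k} \<Longrightarrow> measure M {\<omega> \<in> space M. norm (X j \<omega> - mu) > \<epsilon>} \<le> p"
    and "muhat \<in> borel_measurable M"
    and "\<And>\<omega>. \<omega> \<in> space M \<Longrightarrow> is_geometric_median k (\<lambda>j. X j \<omega>) (muhat \<omega>)"
  shows "measure M {\<omega> \<in> space M. norm (muhat \<omega> - mu) > (2 * (1 - \<alpha>) / (1 - 2 * \<alpha>)) * \<epsilon>}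
           \<le> exp (- real k * psi \<alpha> p)
         \<and> (hilbert_norm TYPE('a) \<longrightarrow>
         measure M {\<omega> \<in> space M. norm (muhat \<omega> - mu) > ((1 - \<alpha>) * sqrt (1 / (1 - 2 * \<alpha>))) * \<epsilon>}
           \<le> exp (- real k * psi \<alpha> p))"
proof -
  have "\<alpha> < 1" using assms(7) by simp
  note tail_bound = median_tail_bound[OF assms(1,5,8,9) this assms(11,13)]
  have "measure M {\<omega> \<in> space M. norm (muhat \<omega> - mu) > (2 * (1 - \<alpha>) / (1 - 2 * \<alpha>)) * \<epsilon>}
          \<le> exp (- real k * psi \<alpha> p)"
    using median_far_many_bad[OF _ assms(6,7,10)] by (intro tail_bound) auto
  moreover have "measure M {\<omega> \<in> space M. norm (muhat \<omega> - mu) > ((1 - \<alpha>) * sqrt (1 / (1 - 2 * \<alpha>))) * \<epsilon>}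
          \<le> exp (- real k * psi \<alpha> p)" if "hilbert_norm TYPE('a)"
    using median_far_many_bad_hilbert[OF that _ assms(6,7,10)] by (intro tail_bound) auto
  ultimately show ?thesis by blast
qed
end
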